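(* Let $f:H\to\mathbb{R}\cup\{+\infty\}$ be proper and lower semicontinuous, and let $(x^k)$ satisfy $\mathbf{H}_1$, $\mathbf{H}_2'$ and $\mathbf{H}_3$, with $m:=\inf_k a_kb_{k+1}>0$. Suppose $(x^k)$ $f$-converges to a point $x^*$ at which $f$ has the K\L{} property with desingularizing function $\varphi:[0,\eta[\to[0,+\infty[$. Let $\Phi:]0,\eta[\to\mathbb{R}$ be any primitive of $-(\varphi')^2$. (i) If $\lim_{t\to0^+}\Phi(t)\in\mathbb{R}$, then there is $K$ with $f(x^K)=f(x^* )$ and $x^k=x^*$ for all $k\ge K$. (ii) If $\lim_{t\to0^+}\Phi(t)=+\infty$, then there exists $k_0\in\mathbb{N}$ such that $f(x^k)-f(x^* )=O\Big(\Phi^{-1}\big(m\sum_{n=k_0}^{k-1}b_{n+1}\big)\Big)$ and $\|x^*-x^k\|=O\Big(\varphi\circ\Phi^{-1}\big(m\sum_{n=k_0}^{k-1}b_{n+1}\big)\Big)$.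
   Context: Subdifferential $\partial f$ (limiting Fréchet subdifferential), lazy slope $\|\partial f(x)\|_-=\inf_{p\in\partial f(x)}\|p\|$ ($+\infty$ if $\partial f(x)=\emptyset$), $f$-convergence: $x^k\to x$ strongly and $f(x^k)\to f(x)$. A desingularizing function is a continuous concave $\varphi:[0,\eta[\to[0,+\infty[$ with $\varphi(0)=0$, $C^1$ on $]0,\eta[$ with $\varphi'>0$; $f$ has the K\L{} property at $x^*$ with it if there is $\delta>0$ with $\varphi'(f(x)-f(x^* ))\|\partial f(x)\|_-\ge1$ for all $x$ with $\|x-x^*\|<\delta$ and $f(x^* )<f(x)<f(x^* )+\eta$. $\mathbf{H}_1$: $f(x^{k+1})+a_k\|x^{k+1}-x^k\|^2\le f(x^k)$, $a_k>0$. $\mathbf{H}_2'$: for each $k$, $b_{k+1}\|\partial f(x^k)\|_-\le\|x^{k+1}-x^k\|$ with $b_{k+1}>0$. $\mathbf{H}_3$: (i) $a_k\ge\underline a>0$; (ii) $(b_k)\notin\ell^1$; (iii) $\sup_{k\ge1}\frac1{a_kb_k}<\infty$. *)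

theory Defs
  imports "HOL-Analysis.Analysis" "HOL-Library.Landau_Symbols"
begin

definition proper_fun :: "('a \<Rightarrow> ereal) \<Rightarrow> bool" where
  "proper_fun f \<longleftrightarrow> (\<forall>x. f x \<noteq> -\<infinity>) \<and> (\<exists>x. f x < \<infinity>)"

definition lower_semicont :: "('a::topological_space \<Rightarrow> ereal) \<Rightarrow> bool" where
  "lower_semicont f \<longleftrightarrow> (\<forall>x t. t < f x \<longrightarrow> (\<forall>\<^sub>F y in at x. t < f y))"

text \<open>Frechet subdifferential: f x finite and
  liminf_{y -> x, y ~= x} (f y - f x - <p, y - x>) / norm (y - x) >= 0.\<close>
definition frechet_subdiff :: "('a::real_inner \<Rightarrow> ereal) \<Rightarrow> 'a \<Rightarrow> 'a set" where
  "frechet_subdiff f x = {p. \<bar>f x\<bar> \<noteq> \<infinity> \<and>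
     (\<forall>e>0. \<exists>d>0. \<forall>y. norm (y - x) < d \<longrightarrow>
        f x + ereal (p \<bullet> (y - x)) - ereal (e * norm (y - x)) \<le> f y)}"

definition limiting_subdiff :: "('a::real_inner \<Rightarrow> ereal) \<Rightarrow> 'a \<Rightarrow> 'a set" where
  "limiting_subdiff f x = {p. \<exists>xs ps. xs \<longlonglongrightarrow> x \<and> (\<lambda>n. f (xs n)) \<longlonglongrightarrow> f x \<and>
     (\<forall>n. ps n \<in> frechet_subdiff f (xs n)) \<and> (\<forall>v. (\<lambda>n. ps n \<bullet> v) \<longlonglongrightarrow> p \<bullet> v)}"

text \<open>Lazy slope: inf of norms over the limiting subdifferential (+infinity if empty).\<close>
definition lazy_slope :: "('a::real_inner \<Rightarrow> ereal) \<Rightarrow> 'a \<Rightarrow> ereal" where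
  "lazy_slope f x = (INF p \<in> limiting_subdiff f x. ereal (norm p))"

definition desingularizing :: "(real \<Rightarrow> real) \<Rightarrow> ereal \<Rightarrow> bool" where
  "desingularizing \<phi> \<eta> \<longleftrightarrow> 0 < \<eta> \<and>
     continuous_on {t. 0 \<le> t \<and> ereal t < \<eta>} \<phi> \<and>
     concave_on {t. 0 \<le> t \<and> ereal t < \<eta>} \<phi> \<and>
     \<phi> 0 = 0 \<and> (\<forall>t. 0 \<le> t \<and> ereal t < \<eta> \<longrightarrow> 0 \<le> \<phi> t) \<and>
     (\<forall>t. 0 < t \<and> ereal t < \<eta> \<longrightarrow> \<phi> differentiable (at t) \<and> 0 < deriv \<phi> t) \<and>
     continuous_on {t. 0 < t \<and> ereal t < \<eta>} (deriv \<phi>)"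

definition KL_at :: "('a::real_inner \<Rightarrow> ereal) \<Rightarrow> 'a \<Rightarrow> (real \<Rightarrow> real) \<Rightarrow> ereal \<Rightarrow> bool" where
  "KL_at f xs \<phi> \<eta> \<longleftrightarrow> \<bar>f xs\<bar> \<noteq> \<infinity> \<and> desingularizing \<phi> \<eta> \<and>
     (\<exists>\<delta>>0. \<forall>x. norm (x - xs) < \<delta> \<and> f xs < f x \<and> f x < f xs + \<eta> \<longrightarrow>
        1 \<le> ereal (deriv \<phi> (real_of_ereal (f x - f xs))) * lazy_slope f x)"

end

theory Submission
  imports Defs
begin

text \<open>Along the tail of the sequence put \<open>r\<^sub>k = f(x\<^sup>k) - f(x\<^sup>*) > 0\<close>. The KL inequality
  combined with \<open>\<^bold>H\<^sub>2'\<close> gives \<open>b\<^sub>k\<^sub>+\<^sub>1 \<le> \<phi>'(r\<^sub>k) \<parallel>x\<^sup>k\<^sup>+\<^sup>1 - x\<^sup>k\<parallel>\<close>, and \<open>\<^bold>H\<^sub>1\<close> gives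
  \<open>r\<^sub>k\<^sub>+\<^sub>1 + a\<^sub>k \<parallel>x\<^sup>k\<^sup>+\<^sup>1 - x\<^sup>k\<parallel>\<^sup>2 \<le> r\<^sub>k\<close>. As \<open>\<phi>\<close> is concave and \<open>\<Phi>' = -(\<phi>')\<^sup>2\<close>, these yield
  \<open>\<Phi>(r\<^sub>k\<^sub>+\<^sub>1) \<ge> \<Phi>(r\<^sub>k) + m b\<^sub>k\<^sub>+\<^sub>1\<close> and \<open>m \<parallel>x\<^sup>k\<^sup>+\<^sup>1 - x\<^sup>k\<parallel> \<le> \<phi>(r\<^sub>k) - \<phi>(r\<^sub>k\<^sub>+\<^sub>1)\<close>.
  Summing, \<open>\<Phi>(r\<^sub>k)\<close> grows at least like the divergent series \<open>m \<Sum> b\<^sub>n\<^sub>+\<^sub>1\<close>. If \<open>\<Phi>\<close> has a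
  finite limit at \<open>0\<^sup>+\<close> this is impossible, so \<open>f(x\<^sup>k)\<close> reaches \<open>f(x\<^sup>*)\<close>, after which \<open>\<^bold>H\<^sub>1\<close>
  freezes the sequence. Otherwise inverting the decreasing \<open>\<Phi>\<close> bounds \<open>r\<^sub>k\<close>, and the
  telescoped \<open>\<phi>\<close>-estimate bounds \<open>\<parallel>x\<^sup>* - x\<^sup>k\<parallel> \<le> \<phi>(r\<^sub>k) / m\<close>.\<close>

lemma le_mult_of_ereal_bounds:
  fixes L :: ereal
  assumes "0 < p" "0 < c" "0 \<le> L" "1 \<le> ereal p * L" "ereal c * L \<le> ereal d"
  shows "c \<le> p * d"
proof (cases L)
  case (real l)
  with assms have "1 \<le> p * l" "c * l \<le> d" by auto
  then have "c \<le> c * (p * l)" using \<open>0 < c\<close> by (simp add: mult_le_cancel_left1)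
  also have "\<dots> \<le> p * d" using \<open>c * l \<le> d\<close> \<open>0 < p\<close> by (simp add: mult.left_commute)
  finally show ?thesis .
qed (use assms in auto)

lemma sum_le_of_increments:
  fixes g c :: "nat \<Rightarrow> real"
  assumes "j \<le> k" and "\<And>n. j \<le> n \<Longrightarrow> n < k \<Longrightarrow> g n + c n \<le> g (Suc n)"
  shows "g j + (\<Sum>n=j..<k. c n) \<le> g k"
  using assms by (induction rule: dec_induct) force+

lemma norm_diff_le_sum_steps:
  fixes x :: "nat \<Rightarrow> 'a::real_normed_vector"
  assumes "j \<le> k"
  shows "norm (x k - x j) \<le> (\<Sum>n=j..<k. norm (x (Suc n) - x n))"
  using assms
proof (induction rule: dec_induct)
  case (step n)
  have "norm (x (Suc n) - x j) \<le> norm (x (Suc n) - x n) + norm (x n - x j)"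
    using norm_triangle_ineq[of "x (Suc n) - x n" "x n - x j"] by simp
  with step show ?case by simp
qed simp

lemma filterlim_sum_atLeastLessThan_at_top:
  fixes g :: "nat \<Rightarrow> real"
  assumes nonneg: "\<And>n. 0 \<le> g n" and "\<not> summable g"
  shows "filterlim (\<lambda>k. \<Sum>n=j..<k. g n) at_top sequentially"
  unfolding filterlim_at_top eventually_sequentially
proof
  fix B
  have "\<not> (\<forall>k. (\<Sum>n<k. g n) \<le> \<bar>B\<bar> + (\<Sum>n<j. g n))"
    using nonneg summableI_nonneg_bounded \<open>\<not> summable g\<close> by blast
  then obtain N where N: "\<bar>B\<bar> + (\<Sum>n<j. g n) < (\<Sum>n<N. g n)" by (auto simp: not_le)
  show "\<exists>N. \<forall>k\<ge>N. B \<le> (\<Sum>n=j..<k. g n)"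
  proof (intro exI allI impI)
    fix k assume "N \<le> k"
    then have "(\<Sum>n<N. g n) \<le> (\<Sum>n<max j k. g n)"
      using nonneg by (intro sum_mono2) auto
    also have "\<dots> = (\<Sum>n<j. g n) + (\<Sum>n=j..<max j k. g n)"
      by (metis atLeast0LessThan max.cobounded1 sum.atLeastLessThan_concat zero_le)
    finally show "B \<le> (\<Sum>n=j..<k. g n)"
      using N by (cases "j \<le> k") (auto simp: max_def)
  qed
qed

locale desingularized_primitive =
  fixes \<phi> \<Phi> :: "real \<Rightarrow> real" and \<eta> :: ereal
  assumes desingularizing: "desingularizing \<phi> \<eta>"
    and primitive: "\<forall>t. 0 < t \<and> ereal t < \<eta> \<longrightarrow> (\<Phi> has_real_derivative - (deriv \<phi> t)\<^sup>2) (at t)"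
begin

abbreviation Dom :: "real set" where
  "Dom \<equiv> {t. 0 < t \<and> ereal t < \<eta>}"

lemma Dom_interval: "0 < s \<Longrightarrow> s \<le> t \<Longrightarrow> t \<in> Dom \<Longrightarrow> s \<in> Dom"
  using ereal_less_eq(3) order.strict_trans1 by blast

lemma \<eta>_pos: "0 < \<eta>"
  using desingularizing by (simp add: desingularizing_def)

lemma Dom_eq: "Dom = (if \<eta> = \<infinity> then {0<..} else {0<..<real_of_ereal \<eta>})"
  using desingularizing by (cases \<eta>) (auto simp: desingularizing_def)

lemma open_Dom: "open Dom"
  by (simp add: Dom_eq)

lemma convex_Dom: "convex Dom"
  by (simp add: Dom_eq)

lemma phi_nonneg: "0 \<le> t \<Longrightarrow> ereal t < \<eta> \<Longrightarrow> 0 \<le> \<phi> t"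
  using desingularizing by (simp add: desingularizing_def)

lemma deriv_phi_pos: "t \<in> Dom \<Longrightarrow> 0 < deriv \<phi> t"
  using desingularizing by (simp add: desingularizing_def)

lemma phi_has_deriv: "t \<in> Dom \<Longrightarrow> (\<phi> has_real_derivative deriv \<phi> t) (at t)"
  using desingularizing by (simp add: desingularizing_def DERIV_deriv_iff_real_differentiable)

lemma Phi_has_deriv: "t \<in> Dom \<Longrightarrow> (\<Phi> has_real_derivative - (deriv \<phi> t)\<^sup>2) (at t)"
  using primitive by simp

lemma phi_le_tangent:
  assumes "s \<in> Dom" "t \<in> Dom"
  shows "\<phi> s \<le> \<phi> t + deriv \<phi> t * (s - t)"
proof -
  have "convex_on {t. 0 \<le> t \<and> ereal t < \<eta>} (\<lambda>s. - \<phi> s)"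
    using desingularizing by (simp add: desingularizing_def concave_on_def)
  then have "convex_on Dom (\<lambda>s. - \<phi> s)"
    by (rule convex_on_subset) (auto simp: convex_Dom)
  moreover have "((\<lambda>s. - \<phi> s) has_real_derivative - deriv \<phi> t) (at t within Dom)"
    using phi_has_deriv[OF assms(2)] by (rule DERIV_minus[THEN has_field_derivative_at_within])
  ultimately have "- deriv \<phi> t * (s - t) \<le> - \<phi> s - - \<phi> t"
    using assms open_Dom convex_Dom
    by (intro convex_on_imp_above_tangent) (auto simp: interior_open convex_connected)
  then show ?thesis by simp
qed

lemma deriv_phi_antimono:
  assumes "s \<in> Dom" "t \<in> Dom" "s \<le> t"
  shows "deriv \<phi> t \<le> deriv \<phi> s"
proof -
  have "0 \<le> (deriv \<phi> s - deriv \<phi> t) * (t - s)"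
    using phi_le_tangent[of s t] phi_le_tangent[of t s] assms by (simp add: algebra_simps)
  with assms show ?thesis
    by (cases "s = t") (auto simp: zero_le_mult_iff)
qed

lemma phi_mono:
  assumes "0 < s" "s \<le> t" "t \<in> Dom"
  shows "\<phi> s \<le> \<phi> t"
proof (cases "s = t")
  case False
  have "\<phi> s < \<phi> t"
  proof (rule DERIV_pos_imp_increasing[where f = \<phi>])
    show "s < t" using assms False by simp
    fix u assume "s \<le> u" "u \<le> t"
    then have "u \<in> Dom" using assms Dom_interval[of u t] by simp
    then show "\<exists>y. (\<phi> has_real_derivative y) (at u) \<and> 0 < y"
      using phi_has_deriv deriv_phi_pos by blast
  qed
  then show ?thesis by simp
qed simp

lemma Phi_strict_antimono:
  assumes "0 < s" "s < t" "t \<in> Dom"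
  shows "\<Phi> t < \<Phi> s"
proof -
  have "- \<Phi> s < - \<Phi> t"
  proof (rule DERIV_pos_imp_increasing[where f = "\<lambda>u. - \<Phi> u"])
    show "s < t" by (fact assms(2))
    fix u assume "s \<le> u" "u \<le> t"
    then have "u \<in> Dom" using assms Dom_interval[of u t] by simp
    then show "\<exists>y. ((\<lambda>u. - \<Phi> u) has_real_derivative y) (at u) \<and> 0 < y"
      using Phi_has_deriv[OF \<open>u \<in> Dom\<close>] deriv_phi_pos[OF \<open>u \<in> Dom\<close>]
      by (auto intro!: derivative_eq_intros)
  qed
  then show ?thesis by simp
qed

lemma Phi_secant_ge:
  assumes "0 < s" "s < t" "t \<in> Dom"
  shows "(t - s) * (deriv \<phi> t)\<^sup>2 \<le> \<Phi> s - \<Phi> t"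
proof -
  have "\<forall>u. s \<le> u \<and> u \<le> t \<longrightarrow> u \<in> Dom"
    using assms Dom_interval[of _ t] by auto
  then obtain z where z: "s < z" "z < t" and mvt: "\<Phi> t - \<Phi> s = (t - s) * - (deriv \<phi> z)\<^sup>2"
    using MVT2[OF \<open>s < t\<close>, of \<Phi> "\<lambda>u. - (deriv \<phi> u)\<^sup>2"] Phi_has_deriv by blast
  have "z \<in> Dom" using z assms Dom_interval[of z t] by simp
  then have "(deriv \<phi> t)\<^sup>2 \<le> (deriv \<phi> z)\<^sup>2"
    using z assms deriv_phi_pos[OF \<open>t \<in> Dom\<close>] deriv_phi_antimono[of z t]
    by (intro power_mono) auto
  then have "(t - s) * (deriv \<phi> t)\<^sup>2 \<le> (t - s) * (deriv \<phi> z)\<^sup>2"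
    using assms by (simp add: mult_left_mono)
  with mvt show ?thesis by simp
qed

lemma descent_step:
  assumes "0 < r'" "r \<in> Dom" and slope: "c \<le> deriv \<phi> r * d"
    and decrease: "r' + \<alpha> * d\<^sup>2 \<le> r" and m: "m \<le> \<alpha> * c" "0 < m" and "0 < c"
  shows "\<Phi> r + m * c \<le> \<Phi> r'" and "m * d \<le> \<phi> r - \<phi> r'"
proof -
  define p where "p = deriv \<phi> r"
  have "0 < p" using deriv_phi_pos[OF \<open>r \<in> Dom\<close>] by (simp add: p_def)
  have "0 < p * d" using \<open>0 < c\<close> slope by (simp add: p_def)
  then have "0 < d" using \<open>0 < p\<close> zero_less_mult_pos by blast
  have "0 < \<alpha> * c" using m by simp
  then have "0 < \<alpha>" using \<open>0 < c\<close> zero_less_mult_pos2 by blast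
  have "0 < \<alpha> * d\<^sup>2" using \<open>0 < \<alpha>\<close> \<open>0 < d\<close> by simp
  then have "r' < r" using decrease by simp
  have "r' \<in> Dom" using \<open>0 < r'\<close> \<open>r' < r\<close> \<open>r \<in> Dom\<close> Dom_interval[of r' r] by simp
  have "m * c \<le> \<alpha> * c * c" using m \<open>0 < c\<close> by (simp add: mult_right_mono)
  also have "\<dots> \<le> \<alpha> * (p * d)\<^sup>2"
  proof -
    have "c * c \<le> (p * d) * (p * d)"
      using slope \<open>0 < c\<close> unfolding p_def[symmetric] by (intro mult_mono) auto
    then show ?thesis using \<open>0 < \<alpha>\<close> by (simp add: power2_eq_square mult.assoc)
  qed
  also have "\<dots> = (\<alpha> * d\<^sup>2) * p\<^sup>2" by (simp add: power_mult_distrib)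
  also have "\<dots> \<le> (r - r') * p\<^sup>2" using decrease by (simp add: mult_right_mono)
  also have "\<dots> \<le> \<Phi> r' - \<Phi> r"
    using Phi_secant_ge[OF \<open>0 < r'\<close> \<open>r' < r\<close> \<open>r \<in> Dom\<close>] by (simp add: p_def)
  finally show "\<Phi> r + m * c \<le> \<Phi> r'" by simp
  have "m * d \<le> \<alpha> * c * d" using m \<open>0 < d\<close> by (simp add: mult_right_mono)
  also have "\<dots> \<le> \<alpha> * (p * d) * d"
    using slope \<open>0 < \<alpha>\<close> \<open>0 < d\<close> unfolding p_def[symmetric]
    by (simp add: mult_right_mono mult_left_mono)
  also have "\<dots> = p * (\<alpha> * d\<^sup>2)" by (simp add: power2_eq_square)
  also have "\<dots> \<le> p * (r - r')" using decrease \<open>0 < p\<close> by (simp add: mult_left_mono)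
  also have "\<dots> \<le> \<phi> r - \<phi> r'"
    using phi_le_tangent[OF \<open>r' \<in> Dom\<close> \<open>r \<in> Dom\<close>] by (simp add: p_def algebra_simps)
  finally show "m * d \<le> \<phi> r - \<phi> r'" .
qed

lemma Phi_image_above:
  assumes "filterlim \<Phi> at_top (at_right 0)" "t \<in> Dom" "\<Phi> t \<le> s"
  shows "s \<in> \<Phi> ` Dom"
proof -
  obtain e where "0 < e" and e: "\<And>u. 0 < u \<Longrightarrow> u < e \<Longrightarrow> s \<le> \<Phi> u"
    using assms(1) unfolding filterlim_at_top eventually_at_right_field by blast
  define u where "u = min e t / 2"
  have "0 < u" "u < e" "u \<le> t" using \<open>0 < e\<close> assms(2) by (auto simp: u_def)
  have "continuous_on {u..t} \<Phi>"
    using \<open>0 < u\<close> assms(2) Dom_interval[of _ t]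
    by (intro continuous_at_imp_continuous_on ballI DERIV_isCont[OF Phi_has_deriv]) auto
  then obtain v where "u \<le> v" "v \<le> t" "\<Phi> v = s"
    using IVT2'[OF assms(3) e[OF \<open>0 < u\<close> \<open>u < e\<close>] \<open>u \<le> t\<close>] by blast
  moreover have "v \<in> Dom" using \<open>0 < u\<close> \<open>u \<le> v\<close> \<open>v \<le> t\<close> assms(2) Dom_interval[of v t] by simp
  ultimately show ?thesis by blast
qed

lemma le_inv_into_Phi:
  assumes "filterlim \<Phi> at_top (at_right 0)" "t \<in> Dom" "\<Phi> t \<le> s" "r \<in> Dom" "s \<le> \<Phi> r"
  shows "inv_into Dom \<Phi> s \<in> Dom" and "r \<le> inv_into Dom \<Phi> s"
proof -
  have s: "s \<in> \<Phi> ` Dom" using Phi_image_above[OF assms(1-3)] .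
  then show "inv_into Dom \<Phi> s \<in> Dom" by (rule inv_into_into)
  moreover have "\<Phi> (inv_into Dom \<Phi> s) = s" using s by (rule f_inv_into_f)
  ultimately show "r \<le> inv_into Dom \<Phi> s"
    using assms(4,5) Phi_strict_antimono[of "inv_into Dom \<Phi> s" r] by force
qed

end

text \<open>The tail \<open>k \<ge> K\<close> of a sequence satisfying \<open>\<^bold>H\<^sub>1\<close> and \<open>\<^bold>H\<^sub>2'\<close>, with \<open>r k\<close> standing for
  \<open>f(x\<^sup>k) - f(x\<^sup>*)\<close>; \<open>slope\<close> is \<open>\<^bold>H\<^sub>2'\<close> already combined with the KL inequality.\<close>
locale KL_descent = desingularized_primitive \<phi> \<Phi> \<eta> for \<phi> \<Phi> \<eta> +
  fixes r :: "nat \<Rightarrow> real" and x :: "nat \<Rightarrow> 'a::real_normed_vector" and x_lim :: 'a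
    and a b :: "nat \<Rightarrow> real" and m :: real and K :: nat
  assumes m_pos: "0 < m"
    and b_pos: "\<And>k. 0 < b (Suc k)"
    and m_le: "\<And>k. m \<le> a k * b (Suc k)"
    and r_Dom: "\<And>k. K \<le> k \<Longrightarrow> r k \<in> Dom"
    and r_tendsto: "r \<longlonglongrightarrow> 0"
    and x_tendsto: "x \<longlonglongrightarrow> x_lim"
    and slope: "\<And>k. K \<le> k \<Longrightarrow> b (Suc k) \<le> deriv \<phi> (r k) * norm (x (Suc k) - x k)"
    and decrease: "\<And>k. K \<le> k \<Longrightarrow> r (Suc k) + a k * (norm (x (Suc k) - x k))\<^sup>2 \<le> r k"
begin

lemma descent_step_seq:
  assumes "K \<le> k"
  shows "\<Phi> (r k) + m * b (Suc k) \<le> \<Phi> (r (Suc k))"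
    and "m * norm (x (Suc k) - x k) \<le> \<phi> (r k) - \<phi> (r (Suc k))"
proof -
  have "0 < r (Suc k)" using r_Dom[of "Suc k"] assms by simp
  note descent = descent_step[OF this r_Dom[OF assms] slope[OF assms] decrease[OF assms] m_le m_pos b_pos]
  show "\<Phi> (r k) + m * b (Suc k) \<le> \<Phi> (r (Suc k))" by (fact descent(1))
  show "m * norm (x (Suc k) - x k) \<le> \<phi> (r k) - \<phi> (r (Suc k))" by (fact descent(2))
qed

lemma Phi_sum_le:
  assumes "K \<le> j" "j \<le> k"
  shows "\<Phi> (r j) + m * (\<Sum>n=j..<k. b (Suc n)) \<le> \<Phi> (r k)"
  using sum_le_of_increments[of j k "\<lambda>n. \<Phi> (r n)" "\<lambda>n. m * b (Suc n)"] descent_step_seq(1) assms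
  by (simp add: sum_distrib_left)

lemma dist_le_phi:
  assumes "K \<le> j" "j \<le> k"
  shows "m * norm (x k - x j) \<le> \<phi> (r j) - \<phi> (r k)"
proof -
  have "- \<phi> (r j) + (\<Sum>n=j..<k. m * norm (x (Suc n) - x n)) \<le> - \<phi> (r k)"
  proof (rule sum_le_of_increments[OF assms(2)])
    fix n assume "j \<le> n" "n < k"
    then show "- \<phi> (r n) + m * norm (x (Suc n) - x n) \<le> - \<phi> (r (Suc n))"
      using descent_step_seq(2)[of n] assms(1) by simp
  qed
  moreover have "m * norm (x k - x j) \<le> (\<Sum>n=j..<k. m * norm (x (Suc n) - x n))"
    using norm_diff_le_sum_steps[OF assms(2), of x] m_pos
    by (simp add: sum_distrib_left[symmetric] mult_left_mono)
  ultimately show ?thesis by simp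
qed

lemma dist_limit_le_phi:
  assumes "K \<le> k"
  shows "m * norm (x_lim - x k) \<le> \<phi> (r k)"
proof (rule LIMSEQ_le_const2)
  show "(\<lambda>n. m * norm (x n - x k)) \<longlonglongrightarrow> m * norm (x_lim - x k)"
    by (intro tendsto_intros x_tendsto)
  have "m * norm (x n - x k) \<le> \<phi> (r k)" if "k \<le> n" for n
    using dist_le_phi[OF assms that] phi_nonneg[of "r n"] r_Dom[of n] assms that by simp
  then show "\<exists>N. \<forall>n\<ge>N. m * norm (x n - x k) \<le> \<phi> (r k)" by blast
qed

lemma filterlim_r_at_right: "filterlim r (at_right 0) sequentially"
  unfolding filterlim_at
proof
  show "\<forall>\<^sub>F k in sequentially. r k \<in> {0<..} \<and> r k \<noteq> 0"
    using r_Dom unfolding eventually_sequentially by force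
qed (fact r_tendsto)

lemma filterlim_sum_b_at_top:
  assumes "\<not> summable b"
  shows "filterlim (\<lambda>k. m * (\<Sum>n=j..<k. b (Suc n))) at_top sequentially"
proof (rule filterlim_tendsto_pos_mult_at_top[OF tendsto_const m_pos])
  show "filterlim (\<lambda>k. \<Sum>n=j..<k. b (Suc n)) at_top sequentially"
    using assms b_pos summable_Suc_iff[of b]
    by (intro filterlim_sum_atLeastLessThan_at_top) (auto intro: less_imp_le)
qed

lemma Phi_not_convergent:
  assumes "\<not> summable b"
  shows "\<not> (\<Phi> \<longlongrightarrow> L) (at_right 0)"
proof
  assume "(\<Phi> \<longlongrightarrow> L) (at_right 0)"
  then have "(\<lambda>k. \<Phi> (r k)) \<longlonglongrightarrow> L"
    using filterlim_compose filterlim_r_at_right by blast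
  moreover have "filterlim (\<lambda>k. \<Phi> (r k)) at_top sequentially"
  proof (rule filterlim_at_top_mono)
    show "filterlim (\<lambda>k. \<Phi> (r K) + m * (\<Sum>n=K..<k. b (Suc n))) at_top sequentially"
      using filterlim_sum_b_at_top[OF assms] by (rule filterlim_tendsto_add_at_top[OF tendsto_const])
    show "\<forall>\<^sub>F k in sequentially. \<Phi> (r K) + m * (\<Sum>n=K..<k. b (Suc n)) \<le> \<Phi> (r k)"
      using Phi_sum_le[of K] unfolding eventually_sequentially by blast
  qed
  ultimately show False
    using not_tendsto_and_filterlim_at_infinity[OF sequentially_bot]
      filterlim_at_top_imp_at_infinity by blast
qed

lemma convergence_rates:
  assumes "\<not> summable b" and Phi_at_top: "filterlim \<Phi> at_top (at_right 0)"
  shows "\<exists>k0. r \<in> O(\<lambda>k. inv_into Dom \<Phi> (m * (\<Sum>n=k0..<k. b (Suc n)))) \<and>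
    (\<lambda>k. norm (x_lim - x k)) \<in> O(\<lambda>k. \<phi> (inv_into Dom \<Phi> (m * (\<Sum>n=k0..<k. b (Suc n)))))"
proof -
  have "\<forall>\<^sub>F k in sequentially. K \<le> k \<and> 0 \<le> \<Phi> (r k)"
    using filterlim_compose[OF Phi_at_top filterlim_r_at_right]
    by (intro eventually_conj eventually_ge_at_top) (simp add: filterlim_at_top)
  then obtain k0 where k0: "K \<le> k0" "0 \<le> \<Phi> (r k0)"
    unfolding eventually_sequentially by blast
  define T where "T = (\<lambda>k. inv_into Dom \<Phi> (m * (\<Sum>n=k0..<k. b (Suc n))))"
  have "\<forall>\<^sub>F k in sequentially. k0 \<le> k \<and> \<Phi> (r k0) \<le> m * (\<Sum>n=k0..<k. b (Suc n))"
    using filterlim_sum_b_at_top[OF assms(1)]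
    by (intro eventually_conj eventually_ge_at_top) (simp add: filterlim_at_top)
  then obtain N where N: "\<And>k. N \<le> k \<Longrightarrow> k0 \<le> k \<and> \<Phi> (r k0) \<le> m * (\<Sum>n=k0..<k. b (Suc n))"
    unfolding eventually_sequentially by blast
  have bound: "K \<le> k \<and> r k \<in> Dom \<and> T k \<in> Dom \<and> r k \<le> T k" if "N \<le> k" for k
  proof -
    have "K \<le> k" and s: "k0 \<le> k" "\<Phi> (r k0) \<le> m * (\<Sum>n=k0..<k. b (Suc n))"
      using N[OF that] k0 by auto
    moreover have "m * (\<Sum>n=k0..<k. b (Suc n)) \<le> \<Phi> (r k)"
      using Phi_sum_le[OF k0(1) s(1)] k0(2) by simp
    ultimately show ?thesis
      using le_inv_into_Phi[OF Phi_at_top r_Dom[OF k0(1)] s(2) r_Dom] r_Dom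
      unfolding T_def by simp
  qed
  have "\<forall>\<^sub>F k in sequentially. norm (r k) \<le> 1 * norm (T k)"
    using bound by (intro eventually_sequentiallyI[of N]) force
  then have "r \<in> O(T)" by (rule bigoI)
  moreover have "\<forall>\<^sub>F k in sequentially. norm (norm (x_lim - x k)) \<le> 1 / m * norm (\<phi> (T k))"
  proof (rule eventually_sequentiallyI[of N])
    fix k assume "N \<le> k"
    have "m * norm (x_lim - x k) \<le> \<phi> (T k)"
      using dist_limit_le_phi[of k] phi_mono[of "r k" "T k"] bound[OF \<open>N \<le> k\<close>] by simp
    moreover have "0 \<le> \<phi> (T k)" using phi_nonneg[of "T k"] bound[OF \<open>N \<le> k\<close>] by simp
    ultimately show "norm (norm (x_lim - x k)) \<le> 1 / m * norm (\<phi> (T k))"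
      using m_pos by (simp add: field_simps)
  qed
  then have "(\<lambda>k. norm (x_lim - x k)) \<in> O(\<lambda>k. \<phi> (T k))" by (rule bigoI)
  ultimately show ?thesis unfolding T_def by blast
qed

end

lemma lazy_slope_nonneg: "0 \<le> lazy_slope f y"
  unfolding lazy_slope_def by (rule INF_greatest) simp

lemma sufficient_decrease_decseq:
  fixes f :: "'a::real_normed_vector \<Rightarrow> ereal"
  assumes "\<forall>k. a k > 0 \<and> f (x (Suc k)) + ereal (a k * (norm (x (Suc k) - x k))\<^sup>2) \<le> f (x k)"
  shows "decseq (\<lambda>k. f (x k))"
proof (rule decseq_SucI)
  fix k
  have "f (x (Suc k)) \<le> f (x (Suc k)) + ereal (a k * (norm (x (Suc k) - x k))\<^sup>2)"
    using assms by (intro add_increasing2) (auto simp: less_imp_le)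
  also have "\<dots> \<le> f (x k)" using assms by blast
  finally show "f (x (Suc k)) \<le> f (x k)" .
qed

lemma sufficient_decrease_stationary:
  fixes f :: "'a::real_normed_vector \<Rightarrow> ereal"
  assumes H1: "\<forall>k. a k > 0 \<and> f (x (Suc k)) + ereal (a k * (norm (x (Suc k) - x k))\<^sup>2) \<le> f (x k)"
    and const: "\<And>k. K \<le> k \<Longrightarrow> f (x k) = ereal c"
    and "K \<le> k"
  shows "x k = x K"
  using \<open>K \<le> k\<close>
proof (induction rule: dec_induct)
  case (step n)
  have "f (x (Suc n)) + ereal (a n * (norm (x (Suc n) - x n))\<^sup>2) \<le> f (x n)"
    using H1 by blast
  then have "c + a n * (norm (x (Suc n) - x n))\<^sup>2 \<le> c"
    using const[of n] const[of "Suc n"] step by simp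
  moreover have "0 < a n" using H1 by blast
  ultimately have "(norm (x (Suc n) - x n))\<^sup>2 \<le> 0"
    by (simp add: mult_le_0_iff)
  with step show ?case by simp
qed simp

lemma KL_descent_eventually:
  fixes f :: "'a::real_inner \<Rightarrow> ereal"
  assumes H1: "\<forall>k. a k > 0 \<and> f (x (Suc k)) + ereal (a k * (norm (x (Suc k) - x k))\<^sup>2) \<le> f (x k)"
    and H2': "\<forall>k. b (Suc k) > 0 \<and>
               ereal (b (Suc k)) * lazy_slope f (x k) \<le> ereal (norm (x (Suc k) - x k))"
    and m_le: "\<And>k. m \<le> a k * b (Suc k)" and m_pos: "0 < m"
    and conv: "x \<longlonglongrightarrow> xs" "(\<lambda>k. f (x k)) \<longlonglongrightarrow> f xs"
    and KL: "KL_at f xs \<phi> \<eta>"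
    and prim: "\<forall>t. 0 < t \<and> ereal t < \<eta> \<longrightarrow> (\<Phi> has_real_derivative - (deriv \<phi> t)\<^sup>2) (at t)"
    and above: "\<And>k. f xs < f (x k)"
  obtains K where
    "KL_descent \<phi> \<Phi> \<eta> (\<lambda>k. real_of_ereal (f (x k)) - real_of_ereal (f xs)) x xs a b m K"
proof -
  define r where "r k = real_of_ereal (f (x k)) - real_of_ereal (f xs)" for k
  interpret desingularized_primitive \<phi> \<Phi> \<eta>
    using KL prim by unfold_locales (simp_all add: KL_at_def)
  obtain fs where fs: "f xs = ereal fs" using KL by (cases "f xs") (auto simp: KL_at_def)
  obtain \<delta> where "\<delta> > 0" and KL_ineq: "\<And>y. norm (y - xs) < \<delta> \<Longrightarrow> f xs < f y \<Longrightarrow> f y < f xs + \<eta> \<Longrightarrow>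
        1 \<le> ereal (deriv \<phi> (real_of_ereal (f y - f xs))) * lazy_slope f y"
    using KL unfolding KL_at_def by blast
  have "f xs < f xs + \<eta>" using fs \<eta>_pos by (cases \<eta>) auto
  then have "\<forall>\<^sub>F k in sequentially. f (x k) < f xs + \<eta>"
    by (rule order_tendstoD(2)[OF conv(2)])
  moreover have "\<forall>\<^sub>F k in sequentially. f (x k) < \<infinity>"
    using order_tendstoD(2)[OF conv(2), of \<infinity>] fs by simp
  moreover have "\<forall>\<^sub>F k in sequentially. norm (x k - xs) < \<delta>"
    using conv(1) \<open>\<delta> > 0\<close> by (simp add: tendsto_iff dist_norm)
  ultimately have "\<forall>\<^sub>F k in sequentially. f (x k) < f xs + \<eta> \<and> f (x k) < \<infinity> \<and> norm (x k - xs) < \<delta>"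
    by (intro eventually_conj)
  then obtain K where K: "\<And>k. K \<le> k \<Longrightarrow> f (x k) < f xs + \<eta> \<and> f (x k) < \<infinity> \<and> norm (x k - xs) < \<delta>"
    unfolding eventually_sequentially by blast
  have f_eq: "f (x k) = ereal (r k + fs)" if "K \<le> k" for k
    using K[OF that] above[of k] fs unfolding r_def by (cases "f (x k)") auto
  have r_Dom: "r k \<in> Dom" if "K \<le> k" for k
    using K[OF that] above[of k] f_eq[OF that] fs by (cases \<eta>) auto
  have "(\<lambda>k. real_of_ereal (f (x k))) \<longlonglongrightarrow> fs"
    using lim_real_of_ereal conv(2) fs by simp
  from tendsto_diff[OF this tendsto_const[of fs]] have "r \<longlonglongrightarrow> 0"
    by (simp add: r_def[abs_def] fs)
  moreover have "b (Suc k) \<le> deriv \<phi> (r k) * norm (x (Suc k) - x k)" if "K \<le> k" for k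
  proof (rule le_mult_of_ereal_bounds)
    show "1 \<le> ereal (deriv \<phi> (r k)) * lazy_slope f (x k)"
      using KL_ineq[of "x k"] K[OF that] above[of k] f_eq[OF that] fs by simp
  qed (use deriv_phi_pos[OF r_Dom[OF that]] H2' lazy_slope_nonneg in auto)
  moreover have "r (Suc k) + a k * (norm (x (Suc k) - x k))\<^sup>2 \<le> r k" if "K \<le> k" for k
  proof -
    have "f (x (Suc k)) + ereal (a k * (norm (x (Suc k) - x k))\<^sup>2) \<le> f (x k)"
      using H1 by blast
    then show ?thesis using f_eq[OF that] f_eq[of "Suc k"] that by simp
  qed
  ultimately have "KL_descent \<phi> \<Phi> \<eta> r x xs a b m K"
    using m_pos H2' m_le conv(1) r_Dom by unfold_locales auto
  then show ?thesis using that unfolding r_def by blast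
qed

lemma sufficient_decrease_finite_termination:
  fixes f :: "'a::real_normed_vector \<Rightarrow> ereal"
  assumes H1: "\<forall>k. a k > 0 \<and> f (x (Suc k)) + ereal (a k * (norm (x (Suc k) - x k))\<^sup>2) \<le> f (x k)"
    and conv: "x \<longlonglongrightarrow> xs" "(\<lambda>k. f (x k)) \<longlonglongrightarrow> f xs"
    and "f (x K) = f xs" "\<bar>f xs\<bar> \<noteq> \<infinity>"
  shows "\<forall>k\<ge>K. x k = xs \<and> f (x k) = f xs"
proof -
  have dec: "decseq (\<lambda>k. f (x k))" by (rule sufficient_decrease_decseq[OF H1])
  obtain c where c: "f xs = ereal c" using assms(5) by (cases "f xs") auto
  have const: "f (x k) = ereal c" if "K \<le> k" for k
    using decseqD[OF dec that] decseq_ge[OF dec conv(2), of k] assms(4) c by simp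
  have "\<forall>\<^sub>F k in sequentially. x k = x K"
    using sufficient_decrease_stationary[OF H1 const] by (rule eventually_sequentiallyI)
  then have "(\<lambda>k. x K) \<longlonglongrightarrow> xs"
    using Lim_transform_eventually[OF conv(1)] by simp
  then have "x K = xs" by (simp add: LIMSEQ_const_iff)
  with const c sufficient_decrease_stationary[OF H1 const] show ?thesis by metis
qed

theorem mainTheorem6:
  fixes f :: "'a::{real_inner, complete_space} \<Rightarrow> ereal"
    and x :: "nat \<Rightarrow> 'a" and xs :: 'a
    and a b :: "nat \<Rightarrow> real"
    and \<phi> \<Phi> :: "real \<Rightarrow> real" and \<eta> :: ereal and m :: real
  assumes proper: "proper_fun f" and lsc: "lower_semicont f"
    and H1: "\<forall>k. a k > 0 \<and> f (x (Suc k)) + ereal (a k * (norm (x (Suc k) - x k))\<^sup>2) \<le> f (x k)"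
    and H2': "\<forall>k. b (Suc k) > 0 \<and>
               ereal (b (Suc k)) * lazy_slope f (x k) \<le> ereal (norm (x (Suc k) - x k))"
    and H3i: "\<exists>a_lb>0. \<forall>k. a_lb \<le> a k"
    and H3ii: "\<not> summable b"
    and H3iii: "bdd_above ((\<lambda>k. 1 / (a k * b k)) ` {1..})"
    and m_def: "m = (INF k. a k * b (Suc k))"
    and m_pos: "m > 0"
    and conv: "x \<longlonglongrightarrow> xs" "(\<lambda>k. f (x k)) \<longlonglongrightarrow> f xs"
    and KL: "KL_at f xs \<phi> \<eta>"
    and prim: "\<forall>t. 0 < t \<and> ereal t < \<eta> \<longrightarrow> (\<Phi> has_real_derivative - (deriv \<phi> t)\<^sup>2) (at t)"
  shows "((\<exists>L. (\<Phi> \<longlongrightarrow> L) (at_right 0)) \<longrightarrow>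
            (\<exists>K. f (x K) = f xs \<and> (\<forall>k\<ge>K. x k = xs)))
       \<and> (filterlim \<Phi> at_top (at_right 0) \<longrightarrow>
            (\<exists>k0. (\<lambda>k. real_of_ereal (f (x k)) - real_of_ereal (f xs)) \<in>
                     O(\<lambda>k. inv_into {t. 0 < t \<and> ereal t < \<eta>} \<Phi> (m * (\<Sum>n=k0..<k. b (Suc n))))
                \<and> (\<lambda>k. norm (xs - x k)) \<in>
                     O(\<lambda>k. \<phi> (inv_into {t. 0 < t \<and> ereal t < \<eta>} \<Phi> (m * (\<Sum>n=k0..<k. b (Suc n)))))))"
proof (cases "\<exists>K. f (x K) = f xs")
  case True
  then obtain K where K: "f (x K) = f xs" by blast
  moreover have "\<bar>f xs\<bar> \<noteq> \<infinity>" using KL by (simp add: KL_at_def)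
  ultimately have stat: "\<forall>k\<ge>K. x k = xs \<and> f (x k) = f xs"
    by (rule sufficient_decrease_finite_termination[OF H1 conv])
  have zero_bigo: "g \<in> O(h)" if "\<And>k. K \<le> k \<Longrightarrow> g k = 0" for g h :: "nat \<Rightarrow> real"
    using that by (intro bigoI[where c = 0] eventually_sequentiallyI[of K]) simp
  have "(\<lambda>k. real_of_ereal (f (x k)) - real_of_ereal (f xs)) \<in> O(h)"
    and "(\<lambda>k. norm (xs - x k)) \<in> O(h)" for h
    using stat by (intro zero_bigo; simp)+
  then show ?thesis using K stat by blast
next
  case False
  then have above: "f xs < f (x k)" for k
    using decseq_ge[OF sufficient_decrease_decseq[OF H1] conv(2), of k] by (metis order_less_le)
  have "bdd_below (range (\<lambda>k. a k * b (Suc k)))"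
    using H1 H2' by (intro bdd_belowI[of _ 0]) (auto simp: less_imp_le)
  then have m_le: "m \<le> a k * b (Suc k)" for k
    unfolding m_def by (rule cINF_lower) simp
  obtain K where "KL_descent \<phi> \<Phi> \<eta> (\<lambda>k. real_of_ereal (f (x k)) - real_of_ereal (f xs)) x xs a b m K"
    using KL_descent_eventually[OF H1 H2' m_le m_pos conv KL prim above] by blast
  then interpret KL_descent \<phi> \<Phi> \<eta> "\<lambda>k. real_of_ereal (f (x k)) - real_of_ereal (f xs)" x xs a b m K .
  show ?thesis
    using Phi_not_convergent[OF H3ii] convergence_rates[OF H3ii] by blast
qed

end
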